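(* The space $(\mathbb{R}^{n_1+n_2},d)$ is complete: every sequence $(x_n)$ in $\mathbb{R}^{n_1+n_2}$ with $\lim_{n,m\to\infty}d(x_n,x_m)=0$ has a limit $x\in\mathbb{R}^{n_1+n_2}$ with $\lim_{n\to\infty}d(x_n,x)=0$.
   Context: Fix integers $n_1,n_2\ge1$ and $\varkappa\in\mathbb{N}_+$, and write $x=(x',x'')\in\mathbb{R}^{n_1}\times\mathbb{R}^{n_2}$. Define $d(x,y)=|x'-y'|+\min\left\{\frac{|x''-y''|}{(|x'|+|y'|)^{\varkappa}},\,|x''-y''|^{1/(1+\varkappa)}\right\}$ (with the first entry of the minimum interpreted as $+\infty$ when $|x'|+|y'|=0$ and $x''\neq y''$), where $|\cdot|$ is the Euclidean norm. *)

theory Defs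
  imports "HOL-Analysis.Analysis"
begin

text \<open>Points of R^(n1+n2) are pairs (x', x'') with x' in R^n1, x'' in R^n2.
  kappa is a positive natural number. When |x'|+|y'| = 0 the first entry of the
  minimum is +infinity if x'' differs from y'', so the minimum is the second entry
  (which is 0 when x'' = y'').\<close>

definition dk :: "nat \<Rightarrow> (real^'n1) \<times> (real^'n2) \<Rightarrow> (real^'n1) \<times> (real^'n2) \<Rightarrow> real" where
  "dk \<kappa> x y =
     norm (fst x - fst y) +
     (if norm (fst x) + norm (fst y) = 0
      then norm (snd x - snd y) powr (1 / (1 + real \<kappa>))
      else min (norm (snd x - snd y) / (norm (fst x) + norm (fst y)) ^ \<kappa>)
               (norm (snd x - snd y) powr (1 / (1 + real \<kappa>))))"

end

theory Submission
  imports Defs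
begin

text \<open>A \<open>dk\<close>-Cauchy sequence is Cauchy in the first component since \<open>|x' - y'| \<le> dk x y\<close>, hence
  bounded there, say \<open>|x'| + |y'| \<le> M\<close>. Then the \<open>x''\<close>-part of \<open>dk\<close> dominates the strictly
  increasing function \<open>min (t / M^\<kappa>) (t^(1/(1+\<kappa>)))\<close> of \<open>t = |x'' - y''|\<close>, so the sequence is
  Cauchy in the second component too. Conversely
  \<open>dk x y \<le> |x' - y'| + |x'' - y''|^(1/(1+\<kappa>))\<close>, so the Euclidean limit is a \<open>dk\<close>-limit.\<close>

lemma norm_fst_diff_le_dk:
  fixes x y :: "(real^'n1) \<times> (real^'n2)"
  shows "norm (fst x - fst y) \<le> dk \<kappa> x y"
  unfolding dk_def by (auto intro!: min.boundedI)

lemma dk_le_norm_fst_diff_plus_root: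
  fixes x y :: "(real^'n1) \<times> (real^'n2)"
  shows "dk \<kappa> x y \<le> norm (fst x - fst y) + norm (snd x - snd y) powr (1 / (1 + real \<kappa>))"
  unfolding dk_def by auto

lemma min_scaled_root_le_dk:
  fixes x y :: "(real^'n1) \<times> (real^'n2)"
  assumes "norm (fst x) + norm (fst y) \<le> M" "M \<ge> 1"
  shows "min (norm (snd x - snd y) / M ^ \<kappa>) (norm (snd x - snd y) powr (1 / (1 + real \<kappa>)))
         \<le> dk \<kappa> x y"
proof (cases "norm (fst x) + norm (fst y) = 0")
  case True
  then show ?thesis unfolding dk_def by (smt (verit) norm_ge_zero)
next
  case False
  let ?s = "norm (fst x) + norm (fst y)"
  have s: "?s > 0" using False by (smt (verit) norm_ge_zero)
  have "?s ^ \<kappa> \<le> M ^ \<kappa>" using s assms by (intro power_mono) auto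
  hence "norm (snd x - snd y) / M ^ \<kappa> \<le> norm (snd x - snd y) / ?s ^ \<kappa>"
    using s assms(2) by (intro divide_left_mono) auto
  then show ?thesis using False unfolding dk_def by (smt (verit) norm_ge_zero)
qed

lemma min_div_powr_less_imp_less:
  fixes c p e t :: real
  assumes "c > 0" "p > 0" "e > 0" "t \<ge> 0"
    and "min (t / c) (t powr p) < min (e / c) (e powr p)"
  shows "t < e"
proof (rule ccontr)
  assume "\<not> t < e"
  then have "e / c \<le> t / c" and "e powr p \<le> t powr p"
    using assms by (auto intro: divide_right_mono powr_mono2)
  with assms(5) show False by linarith
qed

lemma dk_Cauchy_fst:
  fixes X :: "nat \<Rightarrow> (real^'n1) \<times> (real^'n2)"
  assumes "\<forall>e>0. \<exists>N. \<forall>n\<ge>N. \<forall>m\<ge>N. dk \<kappa> (X n) (X m) < e"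
  shows "Cauchy (\<lambda>n. fst (X n))"
proof (rule metric_CauchyI)
  fix e :: real assume "e > 0"
  then obtain N where N: "\<forall>n\<ge>N. \<forall>m\<ge>N. dk \<kappa> (X n) (X m) < e" using assms by blast
  have "dist (fst (X m)) (fst (X n)) < e" if "m \<ge> N" "n \<ge> N" for m n
  proof -
    have "dist (fst (X m)) (fst (X n)) \<le> dk \<kappa> (X m) (X n)"
      unfolding dist_norm by (rule norm_fst_diff_le_dk)
    also have "\<dots> < e" using N that by blast
    finally show ?thesis .
  qed
  then show "\<exists>N. \<forall>m\<ge>N. \<forall>n\<ge>N. dist (fst (X m)) (fst (X n)) < e" by blast
qed

lemma dk_Cauchy_snd:
  fixes X :: "nat \<Rightarrow> (real^'n1) \<times> (real^'n2)"
  assumes Cauchy: "\<forall>e>0. \<exists>N. \<forall>n\<ge>N. \<forall>m\<ge>N. dk \<kappa> (X n) (X m) < e"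
    and bound: "\<And>n m. norm (fst (X n)) + norm (fst (X m)) \<le> M" and "M \<ge> 1"
  shows "Cauchy (\<lambda>n. snd (X n))"
proof (rule metric_CauchyI)
  fix e :: real assume e: "e > 0"
  define \<phi> where "\<phi> t = min (t / M ^ \<kappa>) (t powr (1 / (1 + real \<kappa>)))" for t
  have "e / M ^ \<kappa> > 0" "e powr (1 / (1 + real \<kappa>)) > 0" using e \<open>M \<ge> 1\<close> by auto
  then have "\<phi> e > 0" unfolding \<phi>_def by linarith
  then obtain N where N: "\<forall>n\<ge>N. \<forall>m\<ge>N. dk \<kappa> (X n) (X m) < \<phi> e" using Cauchy by blast
  have "dist (snd (X m)) (snd (X n)) < e" if "m \<ge> N" "n \<ge> N" for m n
  proof -
    have "\<phi> (norm (snd (X m) - snd (X n))) \<le> dk \<kappa> (X m) (X n)"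
      unfolding \<phi>_def by (rule min_scaled_root_le_dk[OF bound \<open>M \<ge> 1\<close>])
    also have "\<dots> < \<phi> e" using N that by blast
    finally have "\<phi> (norm (snd (X m) - snd (X n))) < \<phi> e" .
    then show ?thesis
      unfolding dist_norm \<phi>_def
      by (rule min_div_powr_less_imp_less[rotated 4]) (use \<open>M \<ge> 1\<close> e in auto)
  qed
  then show "\<exists>N. \<forall>m\<ge>N. \<forall>n\<ge>N. dist (snd (X m)) (snd (X n)) < e" by blast
qed

lemma dk_tendsto_zero_if_components_tendsto:
  fixes X :: "nat \<Rightarrow> (real^'n1) \<times> (real^'n2)"
  assumes "(\<lambda>n. fst (X n)) \<longlonglongrightarrow> a" "(\<lambda>n. snd (X n)) \<longlonglongrightarrow> b"
  shows "(\<lambda>n. dk \<kappa> (X n) (a, b)) \<longlonglongrightarrow> 0"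
proof -
  have fst_dist: "(\<lambda>n. norm (fst (X n) - a)) \<longlonglongrightarrow> 0"
    and snd_dist: "(\<lambda>n. norm (snd (X n) - b)) \<longlonglongrightarrow> 0"
    using assms by (simp_all add: tendsto_norm_zero LIM_zero)
  have "(\<lambda>n. norm (snd (X n) - b) powr (1 / (1 + real \<kappa>))) \<longlonglongrightarrow> 0"
    by (rule tendsto_zero_powrI[OF snd_dist]) auto
  from tendsto_add[OF fst_dist this]
  have upper: "(\<lambda>n. norm (fst (X n) - a) + norm (snd (X n) - b) powr (1 / (1 + real \<kappa>))) \<longlonglongrightarrow> 0"
    by simp
  have "0 \<le> dk \<kappa> (X n) (a, b)" for n
    using norm_fst_diff_le_dk[of "X n" "(a, b)" \<kappa>] by (simp add: order_trans[OF norm_ge_zero])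
  moreover have "dk \<kappa> (X n) (a, b)
      \<le> norm (fst (X n) - a) + norm (snd (X n) - b) powr (1 / (1 + real \<kappa>))" for n
    using dk_le_norm_fst_diff_plus_root[of \<kappa> "X n" "(a, b)"] by simp
  ultimately show ?thesis
    by (intro tendsto_sandwich[OF _ _ tendsto_const upper] always_eventually allI)
qed

theorem lemma2p1:
  fixes \<kappa> :: nat and X :: "nat \<Rightarrow> (real^'n1) \<times> (real^'n2)"
  assumes "\<kappa> \<ge> 1"
    and "\<forall>e>0. \<exists>N. \<forall>n\<ge>N. \<forall>m\<ge>N. dk \<kappa> (X n) (X m) < e"
  shows "\<exists>x. (\<lambda>n. dk \<kappa> (X n) x) \<longlonglongrightarrow> 0"
proof -
  have fst_Cauchy: "Cauchy (\<lambda>n. fst (X n))" by (rule dk_Cauchy_fst[OF assms(2)])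
  then obtain B where B: "\<And>n. norm (fst (X n)) \<le> B"
    using cauchy_imp_bounded bounded_iff by (metis rangeI)
  have "norm (fst (X n)) + norm (fst (X m)) \<le> max 1 (2 * B)" for n m
    using B[of n] B[of m] by linarith
  then have "Cauchy (\<lambda>n. snd (X n))" by (rule dk_Cauchy_snd[OF assms(2)]) simp
  then obtain b where "(\<lambda>n. snd (X n)) \<longlonglongrightarrow> b" using Cauchy_convergent_iff convergent_def by blast
  moreover obtain a where "(\<lambda>n. fst (X n)) \<longlonglongrightarrow> a"
    using fst_Cauchy Cauchy_convergent_iff convergent_def by blast
  ultimately show ?thesis using dk_tendsto_zero_if_components_tendsto by blast
qed

end
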